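(* Let $H=(V,E)$, $H_1=(V_1,E_1)$, $H_2=(V_2,E_2)$ be hypergraphs with $V=V_1\cup V_2$ and $E=E_1\cup E_2$. If $V_1\cap V_2\in (L(V_1)\cup E_1)\cap(L(V_2)\cup E_2)$, then \[\mathrm{MC}^H=\overline{\mathrm{MC}}^{H_1}\cap\overline{\mathrm{MC}}^{H_2},\qquad\text{where } \overline{\mathrm{MC}}^{H_k}=\{w\in\mathbb{R}^{\mathcal{J}^H}: \operatorname{proj}_{\mathcal{J}^{H_k}}w\in\mathrm{MC}^{H_k}\},\ k=1,2.\]
   Context: Let $n$ be a positive integer, $[n]=\{1,\dots,n\}$. A hypergraph $H=(V,E)$ here has as vertex set $V$ a family of pairwise disjoint subsets of $[n]$, each of cardinality at least $2$, and hyperedge set $E$ consisting of subsets $e\subseteq V$ with $|e|\ge 2$. Write $L(V)=\{\{I\}: I\in V\}$. For a nonempty $e\subseteq V$, $\mathcal{J}^e$ denotes the family of sets $J\subseteq \bigcup_{I\in e} I$ with $|J\cap I|=1$ for every $I\in e$. Let $\mathcal{J}^H=\bigcup_{e\in L(V)\cup E}\mathcal{J}^e$ (so $\mathcal{J}^{H_k}\subseteq\mathcal{J}^H$). For $w\in\mathbb{R}^{\mathcal{J}^H}$ write $w_i=w_{\{i\}}$ and $w(A)=\sum_{i\in A}w_i$. Let $\mathscr{S}^H=\{w\in\{0,1\}^{\mathcal{J}^H}: w(I)=1\ \forall I\in V;\ w_J=\prod_{i\in J}w_i\ \forall J\in\mathcal{J}^H, |J|>1\}$ and $\mathrm{MC}^H=\operatorname{conv}\mathscr{S}^H$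 (analogously for $H_1,H_2$). $\operatorname{proj}_{S'}$ extracts the coordinates indexed by $S'$. *)

theory Defs
  imports "HOL-Analysis.Analysis" "HOL-Library.Function_Algebras"
begin

(* Real-valued functions on an arbitrary index type form a real vector space
   (pointwise operations); this lets us use the library's convex hull. *)
instantiation "fun" :: (type, real_vector) real_vector
begin
definition scaleR_fun :: "real \<Rightarrow> ('a \<Rightarrow> 'b) \<Rightarrow> 'a \<Rightarrow> 'b" where
  "scaleR_fun r f = (\<lambda>x. r *\<^sub>R f x)"
instance
  by standard (auto simp: scaleR_fun_def fun_eq_iff scaleR_add_right scaleR_add_left)
end

definition hypergraph :: "nat \<Rightarrow> nat set set \<Rightarrow> nat set set set \<Rightarrow> bool" where
  "hypergraph n V E \<longleftrightarrow>
     (\<forall>I\<in>V. I \<subseteq> {1..n} \<and> card I \<ge> 2) \<and>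
     (\<forall>I\<in>V. \<forall>I'\<in>V. I \<noteq> I' \<longrightarrow> I \<inter> I' = {}) \<and>
     (\<forall>e\<in>E. e \<subseteq> V \<and> card e \<ge> 2)"

definition Lv :: "nat set set \<Rightarrow> nat set set set" where
  "Lv V = (\<lambda>I. {I}) ` V"

definition Jfam :: "nat set set \<Rightarrow> nat set set" where
  "Jfam e = {J. J \<subseteq> \<Union>e \<and> (\<forall>I\<in>e. card (J \<inter> I) = 1)}"

definition JH :: "nat set set \<Rightarrow> nat set set set \<Rightarrow> nat set set" where
  "JH V E = \<Union> (Jfam ` (Lv V \<union> E))"

(* R^{J^H}: real functions on nat set vanishing outside J^H *)
definition RJ :: "nat set set \<Rightarrow> (nat set \<Rightarrow> real) set" where
  "RJ S = {w. \<forall>J. J \<notin> S \<longrightarrow> w J = 0}"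

definition SH :: "nat set set \<Rightarrow> nat set set set \<Rightarrow> (nat set \<Rightarrow> real) set" where
  "SH V E = {w \<in> RJ (JH V E).
     (\<forall>J\<in>JH V E. w J \<in> {0,1}) \<and>
     (\<forall>I\<in>V. (\<Sum>i\<in>I. w {i}) = 1) \<and>
     (\<forall>J\<in>JH V E. card J > 1 \<longrightarrow> w J = (\<Prod>i\<in>J. w {i}))}"

definition MC :: "nat set set \<Rightarrow> nat set set set \<Rightarrow> (nat set \<Rightarrow> real) set" where
  "MC V E = convex hull (SH V E)"

definition proj :: "nat set set \<Rightarrow> (nat set \<Rightarrow> real) \<Rightarrow> nat set \<Rightarrow> real" where
  "proj S w = (\<lambda>J. if J \<in> S then w J else 0)"

definition MCbar :: "nat set set \<Rightarrow> nat set set set \<Rightarrow> nat set set \<Rightarrow> nat set set set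
                      \<Rightarrow> (nat set \<Rightarrow> real) set" where
  "MCbar V E Vk Ek = {w \<in> RJ (JH V E). proj (JH Vk Ek) w \<in> MC Vk Ek}"

end

theory Submission
  imports Defs
begin

(*
  Projection onto the coordinates of H_k is linear and maps S^H into S^{H_k}, so MC^H lies in
  both MCbar^{H_k}. Conversely, a point of S^H is exactly a point supported on J^H whose two
  projections lie in S^{H_1} and S^{H_2}, and the coordinates shared by J^{H_1} and J^{H_2} are
  products of singleton coordinates of V_1 \<inter> V_2. Hence s in S^{H_1} and t in S^{H_2} glue to
  a point of S^H as soon as they agree on those singletons.
  Since e = V_1 \<inter> V_2 is an edge of both hypergraphs, every such vertex selects exactly one
  transversal J in J^e, namely the one with coordinate 1. If w lies in both MCbar^{H_k} and its
  projections are convex combinations \<Sum> \<lambda>_s s and \<Sum> \<mu>_t t, then on both sides the vertices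
  selecting J carry total weight w_J. The coupling weights \<lambda>_s \<mu>_t / w_J on pairs (s, t)
  selecting the same J therefore write w as a convex combination of glued vertices.
*)

lemma sum_fun_apply: "sum f A x = (\<Sum>a\<in>A. f a x)"
  for f :: "'i \<Rightarrow> 'a \<Rightarrow> 'b::comm_monoid_add"
  by (induct A rule: infinite_finite_induct) auto

lemma scaleR_fun_apply [simp]: "(r *\<^sub>R f) x = r *\<^sub>R f x"
  by (simp add: scaleR_fun_def)

lemma coupling_sum_fst:
  fixes p :: "'a \<Rightarrow> real" and q :: "'b \<Rightarrow> real"
  assumes "finite A" "finite B" "\<forall>a\<in>A. 0 \<le> p a"
    and mA: "\<And>z. m z = (\<Sum>a\<in>A. if f a = z then p a else 0)"
    and mB: "\<And>z. m z = (\<Sum>b\<in>B. if g b = z then q b else 0)"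
  shows "(\<Sum>x\<in>{x \<in> A \<times> B. f (fst x) = g (snd x)}. p (fst x) * q (snd x) / m (f (fst x)) * \<phi> (fst x))
       = (\<Sum>a\<in>A. p a * \<phi> a)"
proof -
  \<comment> \<open>\<open>m (f a) = 0\<close> forces \<open>p a = 0\<close>, so division by zero does no harm\<close>
  have cancel: "p a * \<phi> a / m (f a) * m (f a) = p a * \<phi> a" if a: "a \<in> A" for a
  proof -
    have "p a \<le> m (f a)"
      unfolding mA using member_le_sum[of a A "\<lambda>a'. if f a' = f a then p a' else 0"] a assms(1,3)
      by auto
    then show ?thesis using a assms(3) by force
  qed
  have "(\<Sum>x\<in>{x \<in> A \<times> B. f (fst x) = g (snd x)}. p (fst x) * q (snd x) / m (f (fst x)) * \<phi> (fst x))
      = (\<Sum>x\<in>A \<times> B. if f (fst x) = g (snd x) then p (fst x) * q (snd x) / m (f (fst x)) * \<phi> (fst x) else 0)"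
    by (rule sum.inter_filter[OF finite_cartesian_product[OF assms(1,2)]])
  also have "\<dots> = (\<Sum>a\<in>A. p a * \<phi> a / m (f a) * (\<Sum>b\<in>B. if g b = f a then q b else 0))"
    unfolding sum.cartesian_product' sum_distrib_left
    by (intro sum.cong refl) (auto simp: mult_ac)
  also have "\<dots> = (\<Sum>a\<in>A. p a * \<phi> a)"
    using cancel by (simp add: mB[symmetric])
  finally show ?thesis .
qed

lemma coupling_sum_snd:
  fixes p :: "'a \<Rightarrow> real" and q :: "'b \<Rightarrow> real"
  assumes "finite A" "finite B" "\<forall>b\<in>B. 0 \<le> q b"
    and mA: "\<And>z. m z = (\<Sum>a\<in>A. if f a = z then p a else 0)"
    and mB: "\<And>z. m z = (\<Sum>b\<in>B. if g b = z then q b else 0)"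
  shows "(\<Sum>x\<in>{x \<in> A \<times> B. f (fst x) = g (snd x)}. p (fst x) * q (snd x) / m (f (fst x)) * \<psi> (snd x))
       = (\<Sum>b\<in>B. q b * \<psi> b)"
proof -
  have "(\<Sum>x\<in>{x \<in> A \<times> B. f (fst x) = g (snd x)}. p (fst x) * q (snd x) / m (f (fst x)) * \<psi> (snd x))
      = (\<Sum>y\<in>{y \<in> B \<times> A. g (fst y) = f (snd y)}. q (fst y) * p (snd y) / m (g (fst y)) * \<psi> (fst y))"
    by (rule sum.reindex_bij_witness[of _ prod.swap prod.swap]) auto
  also have "\<dots> = (\<Sum>b\<in>B. q b * \<psi> b)"
    using assms by (intro coupling_sum_fst) auto
  finally show ?thesis .
qed

lemma sum_coupling_glue:
  fixes A B :: "('i \<Rightarrow> real) set"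
  assumes "finite A" "finite B" "\<forall>a\<in>A. 0 \<le> p a" "\<forall>b\<in>B. 0 \<le> q b"
    and mA: "\<And>z. m z = (\<Sum>a\<in>A. if f a = z then p a else 0)"
    and mB: "\<And>z. m z = (\<Sum>b\<in>B. if g b = z then q b else 0)"
  shows "(\<Sum>x\<in>{x \<in> A \<times> B. f (fst x) = g (snd x)}.
            (p (fst x) * q (snd x) / m (f (fst x))) *\<^sub>R (\<lambda>K. if K \<in> S then fst x K else snd x K))
       = (\<lambda>K. if K \<in> S then (\<Sum>a\<in>A. p a *\<^sub>R a) K else (\<Sum>b\<in>B. q b *\<^sub>R b) K)"
    (is "?lhs = ?rhs")
proof
  fix K
  show "?lhs K = ?rhs K"
    using coupling_sum_fst[OF assms(1-3) mA mB, of "\<lambda>a. a K"]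
      coupling_sum_snd[OF assms(1,2,4) mA mB, of "\<lambda>b. b K"]
    by (simp add: sum_fun_apply)
qed

lemma hypergraph_edge_subset: "hypergraph n V E \<Longrightarrow> e \<in> Lv V \<union> E \<Longrightarrow> e \<subseteq> V"
  by (auto simp: hypergraph_def Lv_def)

lemma hypergraph_edge_nonempty: "hypergraph n V E \<Longrightarrow> e \<in> Lv V \<union> E \<Longrightarrow> e \<noteq> {}"
  by (auto simp: hypergraph_def Lv_def)

lemma hypergraph_finite_vertex: "hypergraph n V E \<Longrightarrow> I \<in> V \<Longrightarrow> finite I"
  unfolding hypergraph_def by (meson finite_atLeastAtMost finite_subset)

lemma JH_Un: "JH (V1 \<union> V2) (E1 \<union> E2) = JH V1 E1 \<union> JH V2 E2"
  by (auto simp: JH_def Lv_def)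

lemma Jfam_subset_JH: "e \<in> Lv V \<union> E \<Longrightarrow> Jfam e \<subseteq> JH V E"
  by (auto simp: JH_def)

lemma JH_E:
  assumes "K \<in> JH V E"
  obtains e where "e \<in> Lv V \<union> E" "K \<in> Jfam e"
  using assms by (auto simp: JH_def)

lemma singleton_in_JH: "I \<in> V \<Longrightarrow> i \<in> I \<Longrightarrow> {i} \<in> JH V E"
  unfolding JH_def Lv_def by (rule UnionI[of "Jfam {I}"]) (auto simp: Jfam_def)

lemma JH_point_in_vertex:
  assumes "hypergraph n V E" "K \<in> JH V E" "i \<in> K"
  obtains I where "I \<in> V" "i \<in> I"
proof -
  obtain e where e: "e \<in> Lv V \<union> E" "K \<in> Jfam e" using assms(2) by (rule JH_E)
  then have "K \<subseteq> \<Union>e" by (simp add: Jfam_def)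
  then show ?thesis using hypergraph_edge_subset[OF assms(1) e(1)] assms(3) that by blast
qed

lemma singleton_in_JH_of_mem: "hypergraph n V E \<Longrightarrow> K \<in> JH V E \<Longrightarrow> i \<in> K \<Longrightarrow> {i} \<in> JH V E"
  by (metis JH_point_in_vertex singleton_in_JH)

lemma JH_finite: "hypergraph n V E \<Longrightarrow> K \<in> JH V E \<Longrightarrow> finite K"
  by (metis JH_point_in_vertex hypergraph_def finite_atLeastAtMost
      finite_subset subsetD subsetI)

lemma JH_nonempty:
  assumes "hypergraph n V E" "K \<in> JH V E"
  shows "K \<noteq> {}"
proof -
  obtain e where e: "e \<in> Lv V \<union> E" "K \<in> Jfam e" using assms(2) by (rule JH_E)
  obtain I where "I \<in> e" using hypergraph_edge_nonempty[OF assms(1) e(1)] by blast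
  then have "card (K \<inter> I) = 1" using e(2) by (simp add: Jfam_def)
  then show ?thesis by auto
qed

lemma Jfam_subset_eq:
  assumes "J \<in> Jfam e" "K \<in> Jfam e" "J \<subseteq> K"
  shows "J = K"
proof
  show "K \<subseteq> J"
  proof
    fix x assume x: "x \<in> K"
    then obtain I where I: "I \<in> e" "x \<in> I" using assms(2) by (auto simp: Jfam_def)
    have card: "card (J \<inter> I) = 1" "card (K \<inter> I) = 1" using assms(1,2) I(1) by (auto simp: Jfam_def)
    have "J \<inter> I = K \<inter> I"
      using card assms(3) by (intro card_subset_eq) (auto intro: card_ge_0_finite)
    then show "x \<in> J" using x I by blast
  qed
qed (fact assms(3))

definition SH_constraints :: "nat set set \<Rightarrow> nat set set set \<Rightarrow> (nat set \<Rightarrow> real) \<Rightarrow> bool" where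
  "SH_constraints V E w \<longleftrightarrow>
     (\<forall>J\<in>JH V E. w J \<in> {0,1}) \<and>
     (\<forall>I\<in>V. (\<Sum>i\<in>I. w {i}) = 1) \<and>
     (\<forall>J\<in>JH V E. 1 < card J \<longrightarrow> w J = (\<Prod>i\<in>J. w {i}))"

lemma SH_iff: "s \<in> SH V E \<longleftrightarrow> s \<in> RJ (JH V E) \<and> SH_constraints V E s"
  by (simp add: SH_def SH_constraints_def)

lemma SH_constraints_mono:
  "Vk \<subseteq> V \<Longrightarrow> JH Vk Ek \<subseteq> JH V E \<Longrightarrow> SH_constraints V E w \<Longrightarrow> SH_constraints Vk Ek w"
  unfolding SH_constraints_def by blast

lemma SH_constraints_Un:
  "SH_constraints (V1 \<union> V2) (E1 \<union> E2) w \<longleftrightarrow> SH_constraints V1 E1 w \<and> SH_constraints V2 E2 w"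
  unfolding SH_constraints_def JH_Un by blast

lemma proj_in_SH_iff:
  assumes "hypergraph n V E"
  shows "proj (JH V E) w \<in> SH V E \<longleftrightarrow> SH_constraints V E w"
proof -
  have "proj (JH V E) w \<in> RJ (JH V E)" by (simp add: RJ_def proj_def)
  moreover have "(\<Prod>i\<in>J. proj (JH V E) w {i}) = (\<Prod>i\<in>J. w {i})" if "J \<in> JH V E" for J
    using singleton_in_JH_of_mem[OF assms that] by (intro prod.cong) (auto simp: proj_def)
  moreover have "(\<Sum>i\<in>I. proj (JH V E) w {i}) = (\<Sum>i\<in>I. w {i})" if "I \<in> V" for I
    using singleton_in_JH[OF that] by (intro sum.cong) (auto simp: proj_def)
  ultimately show ?thesis by (simp add: SH_iff SH_constraints_def proj_def)
qed

lemma SH_01: "s \<in> SH V E \<Longrightarrow> J \<in> JH V E \<Longrightarrow> s J \<in> {0,1}"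
  by (simp add: SH_def)

lemma SH_singleton_01: "s \<in> SH V E \<Longrightarrow> I \<in> V \<Longrightarrow> i \<in> I \<Longrightarrow> s {i} \<in> {0,1}"
  by (metis SH_01 singleton_in_JH)

lemma SH_prod:
  assumes "hypergraph n V E" "s \<in> SH V E" "J \<in> JH V E"
  shows "s J = (\<Prod>i\<in>J. s {i})"
proof (cases "1 < card J")
  case True
  then show ?thesis using assms(2,3) by (simp add: SH_def)
next
  case False
  have "card J \<noteq> 0" using JH_finite[OF assms(1,3)] JH_nonempty[OF assms(1,3)] by simp
  then have "card J = 1" using False by linarith
  then obtain i where "J = {i}" by (rule card_1_singletonE)
  then show ?thesis by simp
qed

lemma card_ones_of_sum_01:
  assumes "finite I" "\<forall>i\<in>I. f i \<in> {0,1::real}" "sum f I = 1"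
  shows "card {i\<in>I. f i = 1} = 1"
proof -
  have "sum f I = (\<Sum>i\<in>I. if f i = 1 then 1 else 0)"
    using assms(2) by (intro sum.cong) auto
  also have "\<dots> = real (card {i\<in>I. f i = 1})"
    by (simp add: sum.inter_filter[symmetric, OF assms(1)])
  finally show ?thesis using assms(3) by simp
qed

definition selected_transversal :: "nat set set \<Rightarrow> (nat set \<Rightarrow> real) \<Rightarrow> nat set" where
  "selected_transversal e s = {i \<in> \<Union>e. s {i} = 1}"

lemma SH_singleton_indicator:
  assumes "s \<in> SH V E" "e \<subseteq> V" "i \<in> \<Union>e"
  shows "s {i} = (if i \<in> selected_transversal e s then 1 else 0)"
  using SH_singleton_01[OF assms(1)] assms(2,3) by (auto simp: selected_transversal_def)

lemma selected_transversal_in_Jfam: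
  assumes "hypergraph n V E" "e \<subseteq> V" "s \<in> SH V E"
  shows "selected_transversal e s \<in> Jfam e"
  unfolding Jfam_def
proof (intro CollectI conjI ballI)
  show "selected_transversal e s \<subseteq> \<Union>e" by (auto simp: selected_transversal_def)
  fix I assume I: "I \<in> e"
  then have "selected_transversal e s \<inter> I = {i\<in>I. s {i} = 1}"
    by (auto simp: selected_transversal_def)
  moreover have "card {i\<in>I. s {i} = 1} = 1"
  proof (rule card_ones_of_sum_01)
    have "I \<in> V" using I assms(2) by blast
    then show "finite I" "\<forall>i\<in>I. s {i} \<in> {0, 1}" "(\<Sum>i\<in>I. s {i}) = 1"
      using hypergraph_finite_vertex[OF assms(1)] SH_singleton_01[OF assms(3)] assms(3)
      by (auto simp: SH_def)
  qed
  ultimately show "card (selected_transversal e s \<inter> I) = 1" by simp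
qed

lemma SH_at_Jfam:
  assumes hg: "hypergraph n V E" and e: "e \<in> Lv V \<union> E" and s: "s \<in> SH V E"
    and J: "J \<in> Jfam e"
  shows "s J = (if J = selected_transversal e s then 1 else 0)"
proof -
  have eV: "e \<subseteq> V" using hypergraph_edge_subset[OF hg e] .
  have "J \<in> JH V E" using J Jfam_subset_JH[OF e] by blast
  then have prod: "s J = (\<Prod>i\<in>J. s {i})" by (rule SH_prod[OF hg s])
  have JU: "J \<subseteq> \<Union>e" using J by (simp add: Jfam_def)
  show ?thesis
  proof (cases "J \<subseteq> selected_transversal e s")
    case True
    then have "J = selected_transversal e s"
      using Jfam_subset_eq[OF J selected_transversal_in_Jfam[OF hg eV s]] by blast
    moreover have "\<forall>i\<in>J. s {i} = 1" using True by (auto simp: selected_transversal_def)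
    ultimately show ?thesis using prod by simp
  next
    case False
    then obtain i where i: "i \<in> J" "i \<notin> selected_transversal e s" by blast
    then have "s {i} = 0" using SH_singleton_indicator[OF s eV, of i] JU by auto
    then have "s J = 0" using prod i(1) JU by (metis JH_finite[OF hg \<open>J \<in> JH V E\<close>] prod_zero_iff)
    then show ?thesis using False by auto
  qed
qed

lemma sum_scaleR_at_Jfam:
  assumes hg: "hypergraph n V E" and e: "e \<in> Lv V \<union> E" and A: "A \<subseteq> SH V E"
  shows "(\<Sum>s\<in>A. if selected_transversal e s = J then la s else 0)
       = (if J \<in> Jfam e then (\<Sum>s\<in>A. la s *\<^sub>R s) J else 0)"
proof (cases "J \<in> Jfam e")
  case True
  have "(\<Sum>s\<in>A. la s *\<^sub>R s) J = (\<Sum>s\<in>A. la s * s J)" by (simp add: sum_fun_apply)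
  also have "\<dots> = (\<Sum>s\<in>A. if selected_transversal e s = J then la s else 0)"
  proof (rule sum.cong[OF refl])
    fix s assume "s \<in> A"
    then have "s J = (if J = selected_transversal e s then 1 else 0)"
      using SH_at_Jfam[OF hg e _ True] A by blast
    then show "la s * s J = (if selected_transversal e s = J then la s else 0)" by auto
  qed
  finally show ?thesis using True by simp
next
  case False
  have "selected_transversal e s \<noteq> J" if "s \<in> A" for s
    using selected_transversal_in_Jfam[OF hg hypergraph_edge_subset[OF hg e]] that A False by blast
  then show ?thesis using False by simp
qed

lemma transversal_weights_eq:
  assumes hg1: "hypergraph n V1 E1" and hg2: "hypergraph n V2 E2"
    and e1: "e \<in> Lv V1 \<union> E1" and e2: "e \<in> Lv V2 \<union> E2"
    and A: "A \<subseteq> SH V1 E1" and B: "B \<subseteq> SH V2 E2"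
    and agree: "\<And>J. J \<in> JH V1 E1 \<Longrightarrow> J \<in> JH V2 E2 \<Longrightarrow>
      (\<Sum>s\<in>A. la s *\<^sub>R s) J = (\<Sum>t\<in>B. mu t *\<^sub>R t) J"
  shows "(\<Sum>s\<in>A. if selected_transversal e s = J then la s else 0)
       = (\<Sum>t\<in>B. if selected_transversal e t = J then mu t else 0)"
  using sum_scaleR_at_Jfam[OF hg1 e1 A] sum_scaleR_at_Jfam[OF hg2 e2 B]
    agree Jfam_subset_JH[OF e1] Jfam_subset_JH[OF e2] by (simp add: subset_iff)

lemma JH_Int_subset_common_vertices:
  assumes hg: "hypergraph n (V1 \<union> V2) E" and hg1: "hypergraph n V1 E1" and hg2: "hypergraph n V2 E2"
    and K1: "K \<in> JH V1 E1" and K2: "K \<in> JH V2 E2"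
  shows "K \<subseteq> \<Union>(V1 \<inter> V2)"
proof
  fix i assume i: "i \<in> K"
  obtain I1 where I1: "I1 \<in> V1" "i \<in> I1" using JH_point_in_vertex[OF hg1 K1 i] .
  obtain I2 where I2: "I2 \<in> V2" "i \<in> I2" using JH_point_in_vertex[OF hg2 K2 i] .
  have "I1 = I2" using hg I1 I2 unfolding hypergraph_def by blast
  then show "i \<in> \<Union>(V1 \<inter> V2)" using I1 I2 by blast
qed

lemma SH_eq_on_common:
  assumes hg: "hypergraph n (V1 \<union> V2) E" and hg1: "hypergraph n V1 E1" and hg2: "hypergraph n V2 E2"
    and s: "s \<in> SH V1 E1" and t: "t \<in> SH V2 E2"
    and agree: "\<And>i. i \<in> \<Union>(V1 \<inter> V2) \<Longrightarrow> s {i} = t {i}"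
    and K1: "K \<in> JH V1 E1" and K2: "K \<in> JH V2 E2"
  shows "s K = t K"
proof -
  have "K \<subseteq> \<Union>(V1 \<inter> V2)" using JH_Int_subset_common_vertices[OF hg hg1 hg2 K1 K2] .
  then have "(\<Prod>i\<in>K. s {i}) = (\<Prod>i\<in>K. t {i})" using agree by (intro prod.cong) auto
  then show ?thesis using SH_prod[OF hg1 s K1] SH_prod[OF hg2 t K2] by simp
qed

lemma glue_in_SH:
  assumes hg: "hypergraph n (V1 \<union> V2) (E1 \<union> E2)" and hg1: "hypergraph n V1 E1"
    and hg2: "hypergraph n V2 E2" and s: "s \<in> SH V1 E1" and t: "t \<in> SH V2 E2"
    and agree: "\<And>i. i \<in> \<Union>(V1 \<inter> V2) \<Longrightarrow> s {i} = t {i}"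
  shows "(\<lambda>K. if K \<in> JH V1 E1 then s K else t K) \<in> SH (V1 \<union> V2) (E1 \<union> E2)"
    (is "?g \<in> _")
proof -
  have sRJ: "s \<in> RJ (JH V1 E1)" and tRJ: "t \<in> RJ (JH V2 E2)" using s t by (simp_all add: SH_iff)
  have "proj (JH V1 E1) ?g = s" using sRJ by (auto simp: proj_def RJ_def)
  then have 1: "SH_constraints V1 E1 ?g" using s proj_in_SH_iff[OF hg1, of ?g] by simp
  have "proj (JH V2 E2) ?g = t"
    using tRJ SH_eq_on_common[OF hg hg1 hg2 s t agree] by (auto simp: proj_def RJ_def)
  then have 2: "SH_constraints V2 E2 ?g" using t proj_in_SH_iff[OF hg2, of ?g] by simp
  have "?g \<in> RJ (JH (V1 \<union> V2) (E1 \<union> E2))" using tRJ by (simp add: RJ_def JH_Un)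
  with 1 2 show ?thesis by (simp add: SH_iff SH_constraints_Un)
qed

lemma linear_proj: "linear (proj S)"
  by (rule linearI) (auto simp: proj_def fun_eq_iff)

lemma convex_RJ: "convex (RJ S)"
  unfolding convex_def RJ_def by simp

lemma MC_subset_MCbar:
  assumes hgk: "hypergraph n Vk Ek" and "Vk \<subseteq> V" "JH Vk Ek \<subseteq> JH V E"
  shows "MC V E \<subseteq> MCbar V E Vk Ek"
proof
  fix w assume w: "w \<in> MC V E"
  have "SH V E \<subseteq> RJ (JH V E)" by (auto simp: SH_iff)
  then have "convex hull SH V E \<subseteq> RJ (JH V E)" using convex_RJ by (rule hull_minimal)
  then have "w \<in> RJ (JH V E)" using w unfolding MC_def by blast
  moreover have "proj (JH Vk Ek) ` SH V E \<subseteq> SH Vk Ek"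
  proof
    fix x assume "x \<in> proj (JH Vk Ek) ` SH V E"
    then obtain s where s: "s \<in> SH V E" and x: "x = proj (JH Vk Ek) s" by blast
    have "SH_constraints Vk Ek s" using s SH_constraints_mono[OF assms(2,3)] by (simp add: SH_iff)
    then show "x \<in> SH Vk Ek" using proj_in_SH_iff[OF hgk] x by simp
  qed
  then have "proj (JH Vk Ek) ` MC V E \<subseteq> MC Vk Ek"
    unfolding MC_def convex_hull_linear_image[OF linear_proj] by (rule hull_mono)
  then have "proj (JH Vk Ek) w \<in> MC Vk Ek" using w by blast
  ultimately show "w \<in> MCbar V E Vk Ek" by (simp add: MCbar_def)
qed

lemma MCbar_Int_subset_MC:
  assumes hg: "hypergraph n (V1 \<union> V2) (E1 \<union> E2)" and hg1: "hypergraph n V1 E1"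
    and hg2: "hypergraph n V2 E2"
    and e1: "V1 \<inter> V2 \<in> Lv V1 \<union> E1" and e2: "V1 \<inter> V2 \<in> Lv V2 \<union> E2"
  shows "MCbar (V1 \<union> V2) (E1 \<union> E2) V1 E1 \<inter> MCbar (V1 \<union> V2) (E1 \<union> E2) V2 E2
    \<subseteq> MC (V1 \<union> V2) (E1 \<union> E2)"
proof
  fix w assume w: "w \<in> MCbar (V1 \<union> V2) (E1 \<union> E2) V1 E1 \<inter> MCbar (V1 \<union> V2) (E1 \<union> E2) V2 E2"
  define J1 where "J1 = JH V1 E1"
  define J2 where "J2 = JH V2 E2"
  define k where "k = selected_transversal (V1 \<inter> V2)"
  have wRJ: "w \<in> RJ (J1 \<union> J2)" using w by (simp add: MCbar_def JH_Un J1_def J2_def)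
  obtain A la where A: "finite A" "A \<subseteq> SH V1 E1" "\<forall>s\<in>A. 0 \<le> la s" "sum la A = 1"
      "(\<Sum>s\<in>A. la s *\<^sub>R s) = proj J1 w"
    using w unfolding MCbar_def MC_def J1_def convex_hull_explicit by blast
  obtain B mu where B: "finite B" "B \<subseteq> SH V2 E2" "\<forall>t\<in>B. 0 \<le> mu t" "sum mu B = 1"
      "(\<Sum>t\<in>B. mu t *\<^sub>R t) = proj J2 w"
    using w unfolding MCbar_def MC_def J2_def convex_hull_explicit by blast
  define m where "m J = (\<Sum>s\<in>A. if k s = J then la s else 0)" for J
  have mB: "m J = (\<Sum>t\<in>B. if k t = J then mu t else 0)" for J
    unfolding m_def k_def
    by (rule transversal_weights_eq[OF hg1 hg2 e1 e2 A(2) B(2)]) (simp add: A(5) B(5) proj_def J1_def J2_def)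
  define P where "P = {x \<in> A \<times> B. k (fst x) = k (snd x)}"
  define c where "c x = la (fst x) * mu (snd x) / m (k (fst x))" for x
  define g where "g x = (\<lambda>K. if K \<in> J1 then fst x K else snd x K)"
    for x :: "(nat set \<Rightarrow> real) \<times> (nat set \<Rightarrow> real)"
  have "w = (\<lambda>K. if K \<in> J1 then (\<Sum>s\<in>A. la s *\<^sub>R s) K else (\<Sum>t\<in>B. mu t *\<^sub>R t) K)"
    using wRJ by (auto simp: A(5) B(5) proj_def RJ_def)
  also have "\<dots> = (\<Sum>x\<in>P. c x *\<^sub>R g x)"
    unfolding P_def c_def g_def by (rule sum_coupling_glue[OF A(1) B(1) A(3) B(3) m_def mB, symmetric])
  also have "\<dots> \<in> MC (V1 \<union> V2) (E1 \<union> E2)"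
    unfolding MC_def
  proof (rule convex_sum[OF _ convex_convex_hull])
    show "finite P" using A(1) B(1) by (simp add: P_def)
    show "sum c P = 1"
      using coupling_sum_fst[OF A(1) B(1) A(3) m_def mB, of "\<lambda>_. 1"] A(4) by (simp add: P_def c_def)
    show "0 \<le> c x" if "x \<in> P" for x
      using that A(3) B(3) by (auto simp: c_def P_def m_def intro!: divide_nonneg_nonneg sum_nonneg)
    show "g x \<in> convex hull SH (V1 \<union> V2) (E1 \<union> E2)" if x: "x \<in> P" for x
    proof -
      have s: "fst x \<in> SH V1 E1" and t: "snd x \<in> SH V2 E2" and "k (fst x) = k (snd x)"
        using x A(2) B(2) by (auto simp: P_def)
      then have "fst x {i} = snd x {i}" if "i \<in> \<Union>(V1 \<inter> V2)" for i
        using SH_singleton_indicator[OF s Int_lower1 that] SH_singleton_indicator[OF t Int_lower2 that]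
        by (simp add: k_def)
      then show ?thesis unfolding g_def J1_def by (intro hull_inc glue_in_SH[OF hg hg1 hg2 s t])
    qed
  qed
  finally show "w \<in> MC (V1 \<union> V2) (E1 \<union> E2)" .
qed

theorem theorem4p2:
  fixes n :: nat and V V1 V2 :: "nat set set" and E E1 E2 :: "nat set set set"
  assumes "hypergraph n V E" and "hypergraph n V1 E1" and "hypergraph n V2 E2"
    and "V = V1 \<union> V2" and "E = E1 \<union> E2"
    and "V1 \<inter> V2 \<in> (Lv V1 \<union> E1) \<inter> (Lv V2 \<union> E2)"
  shows "MC V E = MCbar V E V1 E1 \<inter> MCbar V E V2 E2"
proof -
  have JH: "JH V E = JH V1 E1 \<union> JH V2 E2" unfolding assms(4,5) by (rule JH_Un)
  have "MC V E \<subseteq> MCbar V E V1 E1"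
    by (rule MC_subset_MCbar[OF assms(2)]) (use assms(4) JH in auto)
  moreover have "MC V E \<subseteq> MCbar V E V2 E2"
    by (rule MC_subset_MCbar[OF assms(3)]) (use assms(4) JH in auto)
  moreover have "MCbar V E V1 E1 \<inter> MCbar V E V2 E2 \<subseteq> MC V E"
    using MCbar_Int_subset_MC[OF assms(1)[unfolded assms(4,5)] assms(2,3)] assms(6)
    unfolding assms(4,5) by blast
  ultimately show ?thesis by blast
qed

end
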